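(* Let $X$ and $Y$ be compact Hausdorff spaces and let $A(X)\subseteq C(X)$ and $A(Y)\subseteq C(Y)$ be (real) vector subspaces that contain the constant functions and precisely separate points from closed sets. If $T: A(X)\to A(Y)$ is a linear order isomorphism, then there is a homeomorphism $h:X\to Y$ such that $Tf = T1_X\cdot (f\circ h^{-1})$ for all $f\in A(X)$.
   Context: All function spaces are real. $C(X)$ denotes the real-valued continuous functions on $X$, and $1_X$ the constant function $1$ on $X$. A subspace $A(X)\subseteq C(X)$ separates points from closed sets if for every $x\in X$ and every closed $F\subseteq X$ with $x\notin F$ there is $f\in A(X)$ with $f(x)=1$ and $f=0$ on $F$; it precisely separates points from closed sets if moreover such $f$ can always be chosen with values in $[0,1]$. A linear bijection $T:A(X)\to A(Y)$ is an order isomorphism if for every $f\in A(X)$, $f\ge 0$ (pointwise) if and only if $Tf\ge 0$. *)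

theory Defs
  imports "HOL-Analysis.Analysis"
begin

text \<open>The compact Hausdorff space X is modelled as a type 'a of class t2_space
  whose universe is compact; C(X) is the set of real functions continuous on UNIV.\<close>

definition fun_subspace_of_C :: "('a::topological_space \<Rightarrow> real) set \<Rightarrow> bool" where
  "fun_subspace_of_C A \<longleftrightarrow>
     (\<forall>f\<in>A. continuous_on UNIV f) \<and>
     (\<lambda>_. 0) \<in> A \<and>
     (\<forall>f\<in>A. \<forall>g\<in>A. (\<lambda>x. f x + g x) \<in> A) \<and>
     (\<forall>c. \<forall>f\<in>A. (\<lambda>x. c * f x) \<in> A)"

definition contains_constants :: "('a \<Rightarrow> real) set \<Rightarrow> bool" where
  "contains_constants A \<longleftrightarrow> (\<forall>c::real. (\<lambda>_. c) \<in> A)"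

definition precisely_separates_points_closed :: "('a::topological_space \<Rightarrow> real) set \<Rightarrow> bool" where
  "precisely_separates_points_closed A \<longleftrightarrow>
     (\<forall>x F. closed F \<and> x \<notin> F \<longrightarrow>
        (\<exists>f\<in>A. f x = 1 \<and> (\<forall>y\<in>F. f y = 0) \<and> (\<forall>y. 0 \<le> f y \<and> f y \<le> 1)))"

definition linear_on :: "('a \<Rightarrow> real) set \<Rightarrow> (('a \<Rightarrow> real) \<Rightarrow> ('b \<Rightarrow> real)) \<Rightarrow> bool" where
  "linear_on A T \<longleftrightarrow>
     (\<forall>f\<in>A. \<forall>g\<in>A. T (\<lambda>x. f x + g x) = (\<lambda>y. T f y + T g y)) \<and>
     (\<forall>c. \<forall>f\<in>A. T (\<lambda>x. c * f x) = (\<lambda>y. c * T f y))"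

definition order_isomorphism :: "('a \<Rightarrow> real) set \<Rightarrow> ('b \<Rightarrow> real) set \<Rightarrow> (('a \<Rightarrow> real) \<Rightarrow> ('b \<Rightarrow> real)) \<Rightarrow> bool" where
  "order_isomorphism A B T \<longleftrightarrow>
     linear_on A T \<and> bij_betw T A B \<and>
     (\<forall>f\<in>A. (\<forall>x. 0 \<le> f x) \<longleftrightarrow> (\<forall>y. 0 \<le> T f y))"

end

theory Submission
  imports Defs
begin

text \<open>
  For a point \<open>y \<in> Y\<close>, the functional \<open>f \<mapsto> (T f) y\<close> is positive with positive value at
  \<open>1\<close>, so by compactness all nonnegative functions in its kernel share a common zero
  \<open>\<phi> y \<in> X\<close>. Writing \<open>d = T\<^sup>-\<^sup>1 1\<close>, precise separation in \<open>A(Y)\<close> gives, for every \<open>\<epsilon> > 0\<close>,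
  a function in \<open>A(Y)\<close> that is \<open>1\<close> at \<open>y\<close> and vanishes where \<open>T f\<close> is \<open>\<epsilon>\<close>-far from \<open>T f y\<close>;
  pulling the resulting order bounds back through \<open>T\<^sup>-\<^sup>1\<close> and evaluating at \<open>\<phi> y\<close> yields
  \<open>\<bar>f (\<phi> y) - T f y \<cdot> d (\<phi> y)\<bar> \<le> \<epsilon> \<cdot> d (\<phi> y)\<close>, hence \<open>T f y = T 1 y \<cdot> f (\<phi> y)\<close>.
  Precise separation in \<open>A(X)\<close> makes \<open>\<phi>\<close> continuous and surjective, separation in \<open>A(Y)\<close>
  makes it injective, and a continuous bijection between compact Hausdorff spaces is a
  homeomorphism.
\<close>

lemma eq_0_if_abs_le_mult_eps:
  fixes a b :: real
  assumes "0 \<le> b" and "\<And>\<epsilon>. 0 < \<epsilon> \<Longrightarrow> \<bar>a\<bar> \<le> \<epsilon> * b"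
  shows "a = 0"
proof -
  have "\<bar>a\<bar> \<le> 0 + \<epsilon>" if "0 < \<epsilon>" for \<epsilon>
  proof -
    have "\<bar>a\<bar> \<le> \<epsilon> / (b + 1) * b"
      using assms(1) that by (intro assms(2)) simp
    also have "\<dots> \<le> \<epsilon>"
      using assms(1) that by (simp add: field_simps)
    finally show ?thesis by simp
  qed
  then show ?thesis
    using field_le_epsilon[of "\<bar>a\<bar>" 0] by simp
qed

lemma fun_subspace_of_C_continuous: "fun_subspace_of_C A \<Longrightarrow> f \<in> A \<Longrightarrow> continuous_on UNIV f"
  by (simp add: fun_subspace_of_C_def)

lemma fun_subspace_of_C_lincomb:
  "fun_subspace_of_C A \<Longrightarrow> f \<in> A \<Longrightarrow> g \<in> A \<Longrightarrow> (\<lambda>x. a * f x + b * g x) \<in> A"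
  by (simp add: fun_subspace_of_C_def)

lemma contains_constantsD: "contains_constants A \<Longrightarrow> (\<lambda>_. c) \<in> A"
  by (simp add: contains_constants_def)

lemma linear_on_lincomb:
  assumes "linear_on A T" and "fun_subspace_of_C A" and "f \<in> A" and "g \<in> A"
  shows "T (\<lambda>x. a * f x + b * g x) = (\<lambda>y. a * T f y + b * T g y)"
proof -
  have "(\<lambda>x. a * f x) \<in> A" "(\<lambda>x. b * g x) \<in> A"
    using assms(2-4) by (auto simp: fun_subspace_of_C_def)
  with assms(1,3,4) show ?thesis
    by (simp add: linear_on_def)
qed

locale positive_functional =
  fixes A :: "('a::topological_space \<Rightarrow> real) set"
    and L :: "('a \<Rightarrow> real) \<Rightarrow> real"
  assumes compact_space: "compact (UNIV :: 'a set)"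
    and subspace: "fun_subspace_of_C A"
    and constants: "contains_constants A"
    and lincomb: "\<And>f g a b. f \<in> A \<Longrightarrow> g \<in> A \<Longrightarrow> L (\<lambda>x. a * f x + b * g x) = a * L f + b * L g"
    and nonneg: "\<And>f. f \<in> A \<Longrightarrow> \<forall>x. 0 \<le> f x \<Longrightarrow> 0 \<le> L f"
    and one_pos: "0 < L (\<lambda>_. 1)"
begin

lemma nonneg_kernel_has_zero:
  assumes f: "f \<in> A" "\<forall>x. 0 \<le> f x" "L f = 0"
  shows "\<exists>x. f x = 0"
proof -
  obtain x0 where x0: "\<forall>x. f x0 \<le> f x"
    using continuous_attains_inf[OF compact_space _ fun_subspace_of_C_continuous[OF subspace f(1)]]
    by auto
  have "0 \<le> L (\<lambda>x. 1 * f x + (- f x0) * 1)"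
    using x0 f(1) by (intro nonneg fun_subspace_of_C_lincomb[OF subspace]
        contains_constantsD[OF constants]) auto
  also have "L (\<lambda>x. 1 * f x + (- f x0) * 1) = - f x0 * L (\<lambda>_. 1)"
    using lincomb[OF f(1) contains_constantsD[OF constants, of 1], of 1 "- f x0"] f(3) by simp
  finally have "f x0 * L (\<lambda>_. 1) \<le> 0"
    by simp
  then have "f x0 \<le> 0"
    using one_pos by (simp add: mult_le_0_iff)
  then show ?thesis
    using f(2) by (metis order.antisym)
qed

lemma nonneg_kernel_common_zero: "\<exists>x. \<forall>f\<in>A. (\<forall>z. 0 \<le> f z) \<and> L f = 0 \<longrightarrow> f x = 0"
proof -
  define N where "N = {f\<in>A. (\<forall>z. 0 \<le> f z) \<and> L f = 0}"
  \<comment> \<open>\<open>N\<close> is closed under sums, and the zero set of a sum of nonnegative functions is the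
    intersection of their zero sets.\<close>
  have finite_subfamily: "\<exists>f\<in>N. f -` {0} \<subseteq> (\<Inter>h\<in>N'. h -` {0})"
    if "finite N'" "N' \<subseteq> N" for N'
    using that
  proof (induction N' rule: finite_induct)
    case empty
    have "(\<lambda>_. 0) \<in> N"
      using lincomb[of "\<lambda>_. 0" "\<lambda>_. 0" 0 0] contains_constantsD[OF constants]
      by (simp add: N_def)
    then show ?case by auto
  next
    case (insert h N')
    then obtain f where f: "f \<in> N" "f -` {0} \<subseteq> (\<Inter>h\<in>N'. h -` {0})" and h: "h \<in> N"
      by auto
    have "(\<lambda>x. 1 * f x + 1 * h x) \<in> N"
      using f(1) h fun_subspace_of_C_lincomb[OF subspace, of f h 1 1] lincomb[of f h 1 1]
      by (auto simp: N_def)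
    moreover have "(\<lambda>x. 1 * f x + 1 * h x) -` {0} \<subseteq> (\<Inter>h\<in>insert h N'. h -` {0})"
      using f h by (force simp: N_def add_nonneg_eq_0_iff)
    ultimately show ?case by blast
  qed
  have "UNIV \<inter> (\<Inter>f\<in>N. f -` {0}) \<noteq> {}"
  proof (rule compact_imp_fip_image[OF compact_space])
    fix f assume "f \<in> N"
    then show "closed (f -` {0})"
      using fun_subspace_of_C_continuous[OF subspace]
      by (simp add: N_def continuous_on_closed_vimage)
  next
    fix N' assume "finite N'" "N' \<subseteq> N"
    then obtain f where "f \<in> N" "f -` {0} \<subseteq> (\<Inter>h\<in>N'. h -` {0})"
      using finite_subfamily by blast
    then show "UNIV \<inter> (\<Inter>h\<in>N'. h -` {0}) \<noteq> {}"
      using nonneg_kernel_has_zero by (fastforce simp: N_def)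
  qed
  then show ?thesis
    by (auto simp: N_def)
qed

end

locale order_iso_function_spaces =
  fixes A :: "('a::t2_space \<Rightarrow> real) set"
    and B :: "('b::t2_space \<Rightarrow> real) set"
    and T :: "('a \<Rightarrow> real) \<Rightarrow> ('b \<Rightarrow> real)"
  assumes compact_X: "compact (UNIV :: 'a set)" and compact_Y: "compact (UNIV :: 'b set)"
    and subspace_A: "fun_subspace_of_C A" and constants_A: "contains_constants A"
    and separating_A: "precisely_separates_points_closed A"
    and subspace_B: "fun_subspace_of_C B" and constants_B: "contains_constants B"
    and separating_B: "precisely_separates_points_closed B"
    and order_iso: "order_isomorphism A B T"
begin

lemmas const_in_A = contains_constantsD[OF constants_A]
lemmas const_in_B = contains_constantsD[OF constants_B]
lemmas lincomb_in_A = fun_subspace_of_C_lincomb[OF subspace_A]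

lemma T_in_B: "f \<in> A \<Longrightarrow> T f \<in> B"
  using order_iso by (auto simp: order_isomorphism_def bij_betw_def)

lemma T_surj: "g \<in> B \<Longrightarrow> \<exists>f\<in>A. T f = g"
  using order_iso by (auto simp: order_isomorphism_def bij_betw_def)

lemma T_inj: "f \<in> A \<Longrightarrow> g \<in> A \<Longrightarrow> T f = T g \<Longrightarrow> f = g"
  using order_iso by (auto simp: order_isomorphism_def bij_betw_def inj_on_def)

lemma T_lincomb: "f \<in> A \<Longrightarrow> g \<in> A \<Longrightarrow> T (\<lambda>x. a * f x + b * g x) = (\<lambda>y. a * T f y + b * T g y)"
  by (rule linear_on_lincomb[OF _ subspace_A]) (use order_iso in \<open>simp_all add: order_isomorphism_def\<close>)

lemma T_nonneg_iff: "f \<in> A \<Longrightarrow> (\<forall>x. 0 \<le> f x) \<longleftrightarrow> (\<forall>y. 0 \<le> T f y)"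
  using order_iso by (simp add: order_isomorphism_def)

lemma T_le_iff:
  assumes "f \<in> A" and "g \<in> A"
  shows "(\<forall>x. f x \<le> g x) \<longleftrightarrow> (\<forall>y. T f y \<le> T g y)"
  using T_nonneg_iff[OF lincomb_in_A[OF assms(2,1), of 1 "-1"]] T_lincomb[OF assms(2,1), of 1 "-1"]
  by simp

lemma T_zero: "T (\<lambda>_. 0) = (\<lambda>_. 0)"
  using T_lincomb[of "\<lambda>_. 0" "\<lambda>_. 0" 0 0] const_in_A by simp

lemma T_const: "T (\<lambda>_. c) = (\<lambda>y. c * T (\<lambda>_. 1) y)"
  using T_lincomb[of "\<lambda>_. 1" "\<lambda>_. 1" c 0] const_in_A by simp

lemma T_one_pos: "0 < T (\<lambda>_. 1) y"
proof -
  obtain f where f: "f \<in> A" "T f = (\<lambda>_. 1)"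
    using T_surj const_in_B by blast
  obtain x0 where "\<forall>x. f x \<le> f x0"
    using continuous_attains_sup[OF compact_X _ fun_subspace_of_C_continuous[OF subspace_A f(1)]]
    by auto
  then have "\<forall>z. T f z \<le> T (\<lambda>_. f x0) z"
    using T_le_iff[OF f(1) const_in_A] by blast
  then have "1 \<le> f x0 * T (\<lambda>_. 1) y"
    unfolding T_const[of "f x0"] f(2) by blast
  moreover have "0 \<le> T (\<lambda>_. 1) y"
    using T_nonneg_iff[OF const_in_A, of 1] by simp
  ultimately show ?thesis
    by (cases "T (\<lambda>_. 1) y = 0") simp_all
qed

lemma positive_functional_at: "positive_functional A (\<lambda>f. T f y)"
proof
  show "\<And>f g a b. f \<in> A \<Longrightarrow> g \<in> A \<Longrightarrow> T (\<lambda>x. a * f x + b * g x) y = a * T f y + b * T g y"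
    by (simp add: T_lincomb)
  show "\<And>f. f \<in> A \<Longrightarrow> \<forall>x. 0 \<le> f x \<Longrightarrow> 0 \<le> T f y"
    using T_nonneg_iff by blast
qed (fact compact_X subspace_A constants_A T_one_pos)+

lemma T_eq_at_common_zero:
  assumes common_zero: "\<forall>f\<in>A. (\<forall>z. 0 \<le> f z) \<and> T f y = 0 \<longrightarrow> f x = 0"
    and "f \<in> A"
  shows "T f y = T (\<lambda>_. 1) y * f x"
proof -
  obtain d where d: "d \<in> A" "T d = (\<lambda>_. 1)"
    using T_surj const_in_B by blast
  have f_at_x: "f' x = T f' y * d x" if f'A: "f' \<in> A" for f'
  proof -
    define g where "g = T f'"
    obtain M where M: "\<forall>z. \<bar>g z\<bar> \<le> M"
      using compact_imp_bounded[OF compact_continuous_image[OF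
            fun_subspace_of_C_continuous[OF subspace_B T_in_B[OF f'A]] compact_Y]]
      by (auto simp: bounded_iff g_def)
    define D where "D = 2 * M"
    have close: "\<bar>f' x - g y * d x\<bar> \<le> \<epsilon> * d x" if "0 < \<epsilon>" for \<epsilon>
    proof -
      define F where "F = {z. \<epsilon> \<le> \<bar>g z - g y\<bar>}"
      have "closed F" unfolding F_def
        by (intro closed_Collect_le continuous_intros fun_subspace_of_C_continuous[OF subspace_B]
            T_in_B f'A) (simp_all add: g_def T_in_B f'A)
      moreover have "y \<notin> F"
        using \<open>0 < \<epsilon>\<close> by (simp add: F_def)
      ultimately obtain k where k: "k \<in> B" "k y = 1" "\<forall>z\<in>F. k z = 0" "\<forall>z. 0 \<le> k z \<and> k z \<le> 1"
        using separating_B unfolding precisely_separates_points_closed_def by blast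
      obtain \<kappa> where \<kappa>: "\<kappa> \<in> A" "T \<kappa> = k"
        using T_surj k(1) by blast
      have g_near: "\<bar>g z - g y\<bar> \<le> \<epsilon> + D - D * k z" for z
      proof (cases "z \<in> F")
        case True
        then show ?thesis
          using k(3) M[rule_format, of z] M[rule_format, of y] \<open>0 < \<epsilon>\<close> by (simp add: D_def)
      next
        case False
        moreover have "0 \<le> D - D * k z"
          using k(4)[rule_format, of z] abs_ge_zero[of "g y"] M[rule_format, of y]
          by (simp add: D_def mult_left_le)
        ultimately show ?thesis
          by (simp add: F_def)
      qed
      have T_comb: "T (\<lambda>t. a * d t + b * \<kappa> t) = (\<lambda>z. a + b * k z)" for a b
        using T_lincomb[OF d(1) \<kappa>(1)] d(2) \<kappa>(2) by simp
      have "(\<forall>t. 0 \<le> 1 * d t + (-1) * \<kappa> t) \<and> T (\<lambda>t. 1 * d t + (-1) * \<kappa> t) y = 0"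
        unfolding T_nonneg_iff[OF lincomb_in_A[OF d(1) \<kappa>(1), of 1 "-1"]] T_comb
        using k(2,4) by simp
      then have "1 * d x + (-1) * \<kappa> x = 0"
        by (rule common_zero[rule_format, OF lincomb_in_A[OF d(1) \<kappa>(1), of 1 "-1"]])
      then have \<kappa>_x: "\<kappa> x = d x" by simp
      have "T f' z \<le> T (\<lambda>t. (\<epsilon> + D + g y) * d t + (- D) * \<kappa> t) z" for z
        using g_near[of z] unfolding T_comb g_def by (simp add: abs_le_iff)
      then have "\<forall>t. f' t \<le> (\<epsilon> + D + g y) * d t + (- D) * \<kappa> t"
        unfolding T_le_iff[OF f'A lincomb_in_A[OF d(1) \<kappa>(1)]] by blast
      then have "f' x \<le> (\<epsilon> + D + g y) * d x + (- D) * \<kappa> x" ..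
      then have upper: "f' x - g y * d x \<le> \<epsilon> * d x"
        unfolding \<kappa>_x by (simp add: algebra_simps)
      have "T (\<lambda>t. (g y - \<epsilon> - D) * d t + D * \<kappa> t) z \<le> T f' z" for z
        using g_near[of z] unfolding T_comb g_def by (simp add: abs_le_iff)
      then have "\<forall>t. (g y - \<epsilon> - D) * d t + D * \<kappa> t \<le> f' t"
        unfolding T_le_iff[OF lincomb_in_A[OF d(1) \<kappa>(1)] f'A] by blast
      then have "(g y - \<epsilon> - D) * d x + D * \<kappa> x \<le> f' x" ..
      then have lower: "- (\<epsilon> * d x) \<le> f' x - g y * d x"
        unfolding \<kappa>_x by (simp add: algebra_simps)
      show ?thesis
        using upper lower by (simp add: abs_le_iff)
    qed
    have "0 \<le> d x"
      using T_nonneg_iff[OF d(1)] d(2) by simp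
    then have "f' x - g y * d x = 0"
      using eq_0_if_abs_le_mult_eps close by blast
    then show ?thesis
      by (simp add: g_def)
  qed
  have "T (\<lambda>_. 1) y * d x = 1"
    using f_at_x[OF const_in_A[of 1]] by simp
  then have "T f y = T f y * (T (\<lambda>_. 1) y * d x)"
    by simp
  also have "\<dots> = T (\<lambda>_. 1) y * f x"
    using f_at_x[OF \<open>f \<in> A\<close>] by (simp add: ac_simps)
  finally show ?thesis .
qed

definition \<phi> :: "'b \<Rightarrow> 'a" where
  "\<phi> y = (SOME x. \<forall>f\<in>A. T f y = T (\<lambda>_. 1) y * f x)"

lemma T_eq_weighted_composition: "f \<in> A \<Longrightarrow> T f y = T (\<lambda>_. 1) y * f (\<phi> y)"
proof -
  obtain x where "\<forall>f\<in>A. (\<forall>z. 0 \<le> f z) \<and> T f y = 0 \<longrightarrow> f x = 0"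
    using positive_functional.nonneg_kernel_common_zero[OF positive_functional_at] by blast
  then have "\<exists>x. \<forall>f\<in>A. T f y = T (\<lambda>_. 1) y * f x"
    using T_eq_at_common_zero by blast
  then have "\<forall>f\<in>A. T f y = T (\<lambda>_. 1) y * f (\<phi> y)"
    unfolding \<phi>_def by (rule someI_ex)
  then show "f \<in> A \<Longrightarrow> T f y = T (\<lambda>_. 1) y * f (\<phi> y)" by blast
qed

lemma continuous_\<phi>: "continuous_on UNIV \<phi>"
proof -
  have "open (\<phi> -` U)" if "open U" for U
    unfolding open_subopen[of "\<phi> -` U"]
  proof
    fix y0 assume "y0 \<in> \<phi> -` U"
    then obtain f where f: "f \<in> A" "f (\<phi> y0) = 1" "\<forall>z\<in>-U. f z = 0"
      using \<open>open U\<close> separating_A unfolding precisely_separates_points_closed_def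
      by (metis closed_Compl ComplD vimageE)
    define V where "V = {y. 1/2 < T f y / T (\<lambda>_. 1) y}"
    have "open V" unfolding V_def
      using T_one_pos by (intro open_Collect_less continuous_intros
          fun_subspace_of_C_continuous[OF subspace_B] T_in_B f(1) const_in_A) (simp add: less_le)
    moreover have "y0 \<in> V"
      using T_eq_weighted_composition[OF f(1), of y0] f(2) T_one_pos[of y0] by (simp add: V_def)
    moreover have "V \<subseteq> \<phi> -` U"
    proof
      fix y assume "y \<in> V"
      then have "1/2 < f (\<phi> y)"
        using T_eq_weighted_composition[OF f(1), of y] T_one_pos[of y] by (simp add: V_def)
      then show "y \<in> \<phi> -` U" using f(3) by force
    qed
    ultimately show "\<exists>V. open V \<and> y0 \<in> V \<and> V \<subseteq> \<phi> -` U" by blast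
  qed
  then show ?thesis
    by (simp add: continuous_on_open_vimage)
qed

lemma inj_\<phi>: "inj \<phi>"
proof (rule injI, rule ccontr)
  fix y1 y2 assume eq: "\<phi> y1 = \<phi> y2" and "y1 \<noteq> y2"
  then obtain k where k: "k \<in> B" "k y1 = 1" "k y2 = 0"
    using separating_B unfolding precisely_separates_points_closed_def
    by (metis closed_singleton singletonD singletonI)
  obtain \<kappa> where \<kappa>: "\<kappa> \<in> A" "T \<kappa> = k"
    using T_surj k(1) by blast
  have "T (\<lambda>_. 1) y1 * \<kappa> (\<phi> y1) = 1" "T (\<lambda>_. 1) y2 * \<kappa> (\<phi> y1) = 0"
    using T_eq_weighted_composition[OF \<kappa>(1)] \<kappa>(2) k(2,3) eq by metis+
  then show False
    using T_one_pos[of y2] by simp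
qed

lemma surj_\<phi>: "range \<phi> = UNIV"
proof (rule ccontr)
  assume "range \<phi> \<noteq> UNIV"
  then obtain x where x: "x \<notin> range \<phi>" by blast
  have "closed (range \<phi>)"
    by (rule compact_imp_closed, rule compact_continuous_image[OF continuous_\<phi> compact_Y])
  then obtain f where f: "f \<in> A" "f x = 1" "\<forall>z\<in>range \<phi>. f z = 0"
    using x separating_A unfolding precisely_separates_points_closed_def by blast
  have "T f = T (\<lambda>_. 0)"
    using T_eq_weighted_composition[OF f(1)] f(3) T_zero by auto
  then have "f = (\<lambda>_. 0)"
    using T_inj f(1) const_in_A by blast
  then show False using f(2) by simp
qed

end

theorem theorem2p1:
  fixes A :: "('a::t2_space \<Rightarrow> real) set"
    and B :: "('b::t2_space \<Rightarrow> real) set"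
    and T :: "('a \<Rightarrow> real) \<Rightarrow> ('b \<Rightarrow> real)"
  assumes "compact (UNIV :: 'a set)" and "compact (UNIV :: 'b set)"
    and "fun_subspace_of_C A" and "contains_constants A" and "precisely_separates_points_closed A"
    and "fun_subspace_of_C B" and "contains_constants B" and "precisely_separates_points_closed B"
    and "order_isomorphism A B T"
  shows "\<exists>h g. homeomorphism UNIV UNIV h g \<and>
           (\<forall>f\<in>A. \<forall>y. T f y = T (\<lambda>_. 1) y * f (g y))"
proof -
  interpret order_iso_function_spaces A B T
    using assms by unfold_locales
  obtain h where "homeomorphism UNIV UNIV \<phi> h"
    using homeomorphism_compact[OF compact_Y continuous_\<phi> surj_\<phi> inj_\<phi>] by blast
  then have "homeomorphism UNIV UNIV h \<phi>"
    by (rule homeomorphism_symD)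
  then show ?thesis
    using T_eq_weighted_composition by blast
qed

end
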